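(* Let $X,Y$ be $\mathbb{Q}$-vector spaces and let $f:X\to Y$. Suppose $X$ carries a topology $\tau_X$ such that every neighborhood of the origin is naturally absorbent. Let $B$ be a neighborhood of the origin and $s\ge1$. If $\Delta_{h_1h_2\cdots h_s}f(x)=0$ for all $x\in X$ and all $h_1,\dots,h_s\in B$, then $\Delta_{h_1h_2\cdots h_s}f(x)=0$ for all $(x,h_1,\dots,h_s)\in X^{s+1}$.
   Context: A set $B\subseteq X$ is called naturally absorbent if for each $x\in X$ there exists $k\in\mathbb{N}$ with $x\in kB=\{kz:z\in B\}$. For $h\in X$, $\Delta_hf(x)=f(x+h)-f(x)$ and $\Delta_{h_1h_2\cdots h_s}f(x)=\Delta_{h_1}\left(\Delta_{h_2\cdots h_s}f\right)(x)$ for $s\ge 2$. *)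

theory Defs
  imports "HOL-Analysis.Analysis"
begin

definition naturally_absorbent :: "(rat \<Rightarrow> 'x \<Rightarrow> 'x) \<Rightarrow> 'x set \<Rightarrow> bool" where
  "naturally_absorbent sc B \<longleftrightarrow> (\<forall>x. \<exists>k::nat. x \<in> (\<lambda>z. sc (of_nat k) z) ` B)"

definition diff_op :: "'x::ab_group_add \<Rightarrow> ('x \<Rightarrow> 'y::ab_group_add) \<Rightarrow> 'x \<Rightarrow> 'y" where
  "diff_op h f x = f (x + h) - f x"

fun diffs :: "'x::ab_group_add list \<Rightarrow> ('x \<Rightarrow> 'y::ab_group_add) \<Rightarrow> 'x \<Rightarrow> 'y" where
  "diffs [] f = f"
| "diffs (h # hs) f = diff_op h (diffs hs f)"

definition nhd0 :: "'x::zero topology \<Rightarrow> 'x set \<Rightarrow> bool" where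
  "nhd0 T B \<longleftrightarrow> (\<exists>U. openin T U \<and> 0 \<in> U \<and> U \<subseteq> B)"

end

theory Submission
  imports Defs
begin

(* For fixed outer increments ps and inner increments qs, the map
   h \<mapsto> diffs (ps @ h # qs) f is additive up to a translation of the argument:
     Delta_{a+b} g (y) = Delta_a g (y) + Delta_b g (y + a).
   Hence the set of increments h in a given slot for which the iterated difference
   vanishes identically contains 0 and is closed under addition, so it contains
   all natural multiples k z of any of its elements z.
   Since B is naturally absorbent, every increment is such a multiple of an element
   of B.  Replacing the increments one slot at a time (from the innermost one
   outwards, by induction on the list of already arbitrary slots) turns the
   hypothesis "all increments in B" into "all increments arbitrary". *)

lemma diffs_append: "diffs (ps @ qs) f = diffs ps (diffs qs f)"
  by (induction ps) auto

lemma diffs_translate: "diffs ps (\<lambda>y. g (y + a)) = (\<lambda>x. diffs ps g (x + a))"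
  by (induction ps) (auto simp: diff_op_def algebra_simps)

lemma diffs_add: "diffs ps (\<lambda>y. u y + v y) = (\<lambda>x. diffs ps u x + diffs ps v x)"
  by (induction ps) (auto simp: diff_op_def algebra_simps)

lemma diffs_const_zero: "diffs ps (\<lambda>_. 0) = (\<lambda>_. 0)"
  by (induction ps) (auto simp: diff_op_def)

text \<open>Splitting a sum of increments in an arbitrary slot; this is the identity
  \<open>diff_op (a + b) g y = diff_op a g y + diff_op b g (y + a)\<close> propagated through the outer differences.\<close>
lemma diffs_slot_add:
  "diffs (ps @ (a + b) # qs) f x = diffs (ps @ a # qs) f x + diffs (ps @ b # qs) f (x + a)"
proof -
  let ?g = "diffs qs f"
  have "diff_op (a + b) ?g = (\<lambda>y. diff_op a ?g y + diff_op b ?g (y + a))"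
    by (auto simp: diff_op_def algebra_simps)
  then have "diffs (ps @ (a + b) # qs) f x
      = diffs ps (\<lambda>y. diff_op a ?g y + diff_op b ?g (y + a)) x"
    by (simp add: diffs_append)
  also have "\<dots> = diffs ps (diff_op a ?g) x + diffs ps (\<lambda>y. diff_op b ?g (y + a)) x"
    by (simp add: diffs_add)
  also have "\<dots> = diffs (ps @ a # qs) f x + diffs (ps @ b # qs) f (x + a)"
    by (simp add: diffs_translate diffs_append)
  finally show ?thesis .
qed

lemma diffs_slot_zero: "diffs (ps @ 0 # qs) f x = 0"
proof -
  have "diff_op 0 (diffs qs f) = (\<lambda>_. 0)"
    by (auto simp: diff_op_def)
  then show ?thesis
    by (simp add: diffs_append diffs_const_zero)
qed

lemma diffs_vanish_slot_add:
  assumes "\<And>y. diffs (ps @ a # qs) f y = 0" and "\<And>y. diffs (ps @ b # qs) f y = 0"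
  shows "diffs (ps @ (a + b) # qs) f x = 0"
  using assms by (simp add: diffs_slot_add)

lemma (in vector_space) diffs_vanish_slot_nat_multiple:
  assumes "\<And>y. diffs (ps @ z # qs) f y = 0"
  shows "diffs (ps @ scale (of_nat k) z # qs) f x = 0"
proof (induction k arbitrary: x)
  case 0
  show ?case by (simp add: diffs_slot_zero)
next
  case (Suc k)
  have "scale (of_nat (Suc k)) z = scale (of_nat k) z + z"
    by (simp add: scale_left_distrib)
  then show ?case
    using Suc.IH assms diffs_vanish_slot_add by metis
qed

lemma diffs_vanish_outer_slots:
  fixes sc :: "rat \<Rightarrow> 'x::ab_group_add \<Rightarrow> 'x"
  assumes "vector_space sc"
    and absorbent: "naturally_absorbent sc B"
    and vanish: "\<And>hs x. length hs = s \<Longrightarrow> set hs \<subseteq> B \<Longrightarrow> diffs hs f x = 0"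
  shows "length ps + length qs = s \<Longrightarrow> set qs \<subseteq> B \<Longrightarrow> diffs (ps @ qs) f x = 0"
proof (induction ps arbitrary: qs x rule: rev_induct)
  case Nil
  then show ?case using vanish by simp
next
  case (snoc h ps)
  interpret vector_space sc by fact
  obtain k z where h: "h = sc (of_nat k) z" and "z \<in> B"
    using absorbent unfolding naturally_absorbent_def by blast
  have "diffs (ps @ z # qs) f y = 0" for y
    using snoc.IH[of "z # qs"] snoc.prems \<open>z \<in> B\<close> by simp
  then have "diffs (ps @ h # qs) f x = 0"
    unfolding h by (rule diffs_vanish_slot_nat_multiple)
  then show ?case by simp
qed

lemma diffs_vanish_everywhere:
  fixes sc :: "rat \<Rightarrow> 'x::ab_group_add \<Rightarrow> 'x"
  assumes "vector_space sc"
    and "naturally_absorbent sc B"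
    and "\<And>hs x. length hs = s \<Longrightarrow> set hs \<subseteq> B \<Longrightarrow> diffs hs f x = 0"
    and "length hs = s"
  shows "diffs hs f x = 0"
  using diffs_vanish_outer_slots[OF assms(1-3), where ps = hs and qs = "[]"] assms(4) by simp

theorem theorem4:
  fixes scX :: "rat \<Rightarrow> 'x::ab_group_add \<Rightarrow> 'x"
    and scY :: "rat \<Rightarrow> 'y::ab_group_add \<Rightarrow> 'y"
    and T :: "'x topology"
    and f :: "'x \<Rightarrow> 'y"
    and B :: "'x set"
    and s :: nat
  assumes "vector_space scX" and "vector_space scY"
    and "topspace T = UNIV"
    and "\<And>V. nhd0 T V \<Longrightarrow> naturally_absorbent scX V"
    and "nhd0 T B"
    and "s \<ge> 1"
    and "\<And>hs x. length hs = s \<Longrightarrow> set hs \<subseteq> B \<Longrightarrow> diffs hs f x = 0"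
  shows "\<forall>hs x. length hs = s \<longrightarrow> diffs hs f x = 0"
proof -
  have "naturally_absorbent scX B"
    using assms(4,5) by blast
  then show ?thesis
    using diffs_vanish_everywhere[OF assms(1)] assms(7) by blast
qed

end
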